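(* The function $\widetilde{M_f}$ defined in the context satisfies $\lim_{r\to+\infty}\widetilde{M_f}(r)=-\infty$.
   Context: For $r>\frac23$ let $u_b(r)\in(\frac65,\frac43)$ be the unique $u\in(\frac65,\frac43)$ with $2-u+2q(1-u)=0$ at $q=1+\sqrt{\frac{r+u-2}{r+0.1}}$. Set $q_{f,\pm}(r)=1\pm\sqrt{\frac{r}{r+0.1}}$, $q_{b,\pm}(r)=1\pm\sqrt{\frac{r+u_b(r)-2}{r+0.1}}$, $S(r)=(q_{f,+}-2q_{f,-})+(q_{b,+}-2q_{b,-})$ and $D_0(r)=\frac{2(2-u_b(r))^2}{(r+0.1)S(r)^2}$ (equivalently, $D_0(r)>0$ together with some $\mu_0(r)$ solves $2+\mu=\frac12\sqrt{2D(r+0.1)}(q_{f,+}-2q_{f,-})$ and $u_b+\mu=-\frac12\sqrt{2D(r+0.1)}(q_{b,+}-2q_{b,-})$). Let $\phi(\chi)=(1+e^{-\frac{\sqrt2}{2}\chi})^{-1}$, $\kappa_f(r)=\frac12-\frac{q_{f,-}(r)}{q_{f,+}(r)}$ and $$\widetilde{M_f}(r)=-q_{f,+}(r)\sqrt{\frac{r+0.1}{D_0(r)}}\int_{-\infty}^{\infty}e^{-\sqrt2\kappa_f(r)\chi}\phi'(\chi)^2d\chi+\int_{-\infty}^{\infty}e^{-\sqrt2\kappa_f(r)\chi}\phi'(\chi)\phi(\chi)d\chi .$$ *)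

theory Defs
  imports "HOL-Analysis.Analysis"
begin

definition qb_of :: "real \<Rightarrow> real \<Rightarrow> real" where
  "qb_of r u = 1 + sqrt ((r + u - 2) / (r + 0.1))"

definition u_b :: "real \<Rightarrow> real" where
  "u_b r = (THE u. u \<in> {6/5<..<4/3} \<and> 2 - u + 2 * qb_of r u * (1 - u) = 0)"

definition q_fp :: "real \<Rightarrow> real" where
  "q_fp r = 1 + sqrt (r / (r + 0.1))"

definition q_fm :: "real \<Rightarrow> real" where
  "q_fm r = 1 - sqrt (r / (r + 0.1))"

definition q_bp :: "real \<Rightarrow> real" where
  "q_bp r = 1 + sqrt ((r + u_b r - 2) / (r + 0.1))"

definition q_bm :: "real \<Rightarrow> real" where
  "q_bm r = 1 - sqrt ((r + u_b r - 2) / (r + 0.1))"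

definition S_fun :: "real \<Rightarrow> real" where
  "S_fun r = (q_fp r - 2 * q_fm r) + (q_bp r - 2 * q_bm r)"

definition D0 :: "real \<Rightarrow> real" where
  "D0 r = 2 * (2 - u_b r)^2 / ((r + 0.1) * (S_fun r)^2)"

definition phi :: "real \<Rightarrow> real" where
  "phi x = 1 / (1 + exp (- (sqrt 2 / 2) * x))"

definition kappa_f :: "real \<Rightarrow> real" where
  "kappa_f r = 1/2 - q_fm r / q_fp r"

definition Mf_tilde :: "real \<Rightarrow> real" where
  "Mf_tilde r =
     - q_fp r * sqrt ((r + 0.1) / D0 r) *
         integral UNIV (\<lambda>x. exp (- sqrt 2 * kappa_f r * x) * (deriv phi x)^2)
     + integral UNIV (\<lambda>x. exp (- sqrt 2 * kappa_f r * x) * deriv phi x * phi x)"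

end

(*
  For r >= 2 the root u_b(r) lies in (6/5, 4/3), hence S(r) >= 1 and D_0(r) <= 2/(r + 0.1), so
  the prefactor q_{f,+} sqrt((r + 0.1)/D_0) grows at least like (r + 0.1)/2. Since
  0 <= kappa_f(r) <= 1/2, the tilt exp(-sqrt 2 kappa_f x) never beats the decay of the logistic
  profile: writing E = exp(-x/sqrt 2), phi^2 (1 - phi) = E/(1 + E)^3 and both integrands are
  bounded by exp(-|x|/sqrt 2), uniformly in r. The first integrand is moreover at least 1/128
  on [-1, 0]. Hence Mf_tilde(r) <= C - (r + 0.1)/256 for a constant C.
*)

theory Submission
  imports Defs
begin

lemma u_b_equation_strict_decreasing:
  assumes r: "4/5 \<le> r" and uv: "6/5 < u" "u < v"
  shows "2 - v + 2 * qb_of r v * (1 - v) < 2 - u + 2 * qb_of r u * (1 - u)"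
proof -
  have "sqrt ((r + u - 2) / (r + 0.1)) \<le> sqrt ((r + v - 2) / (r + 0.1))"
    using r uv by (intro real_sqrt_le_mono divide_right_mono) auto
  then have mono: "qb_of r u \<le> qb_of r v" by (simp add: qb_of_def)
  have "1 \<le> qb_of r u" using r uv by (simp add: qb_of_def)
  then have "qb_of r u * (u - 1) \<le> qb_of r v * (v - 1)"
    using mono uv by (intro mult_mono) auto
  then show ?thesis using uv by (simp add: algebra_simps)
qed

lemma u_b_equation_unique_root:
  assumes r: "4/5 \<le> r"
  shows "\<exists>!u. u \<in> {6/5<..<4/3} \<and> 2 - u + 2 * qb_of r u * (1 - u) = 0"
proof -
  define f where "f u = 2 - u + 2 * qb_of r u * (1 - u)" for u
  have "(r + 6/5 - 2) / (r + 0.1) < 1" using r by (simp add: divide_less_eq)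
  then have "qb_of r (6/5) < 2" by (simp add: qb_of_def)
  then have left: "0 < f (6/5)" by (simp add: f_def)
  have "0 < (r + 4/3 - 2) / (r + 0.1)" using r by simp
  then have "1 < qb_of r (4/3)" by (simp add: qb_of_def)
  then have right: "f (4/3) < 0" by (simp add: f_def)
  have "continuous_on {6/5..4/3} f"
    unfolding f_def qb_of_def using r by (intro continuous_intros) auto
  then obtain u where u: "6/5 \<le> u" "u \<le> 4/3" "f u = 0"
    using IVT2'[of f "4/3" 0 "6/5"] left right by auto
  moreover have "u \<noteq> 6/5" "u \<noteq> 4/3" using left right u(3) by (metis order_less_irrefl)+
  ultimately have u_mem: "u \<in> {6/5<..<4/3}" by auto
  show ?thesis
  proof (rule ex1I[of _ u])
    show "u \<in> {6/5<..<4/3} \<and> 2 - u + 2 * qb_of r u * (1 - u) = 0"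
      using u_mem u by (simp add: f_def)
  next
    fix v assume v: "v \<in> {6/5<..<4/3} \<and> 2 - v + 2 * qb_of r v * (1 - v) = 0"
    show "v = u"
      using u_b_equation_strict_decreasing[OF r, of u v] u_b_equation_strict_decreasing[OF r, of v u]
        u_mem v u(3) by (cases u v rule: linorder_cases) (auto simp: f_def)
  qed
qed

lemma u_b_mem: "4/5 \<le> r \<Longrightarrow> u_b r \<in> {6/5<..<4/3}"
  unfolding u_b_def using theI'[OF u_b_equation_unique_root] by blast

lemma integrable_exp_minus_abs:
  fixes a :: real
  assumes a: "0 < a"
  shows "(\<lambda>x. exp (- a * \<bar>x\<bar>)) integrable_on UNIV"
proof -
  let ?f = "\<lambda>x. exp (- a * \<bar>x\<bar>)"
  have "(\<lambda>x. exp (- a * x)) integrable_on {0..}"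
    using integrable_on_exp_minus_to_infinity[OF a] .
  then have pos: "?f absolutely_integrable_on {0..}"
    by (intro nonnegative_absolutely_integrable_1) (auto elim: integrable_eq)
  have "(\<lambda>x. ?f (- x)) absolutely_integrable_on {..0}"
    using has_absolute_integral_reflect_real[of "{..0}" "{0..}" ?f] pos by auto
  then have neg: "?f integrable_on {..0}"
    by (simp add: absolutely_integrable_on_def)
  have "{..0} \<inter> {0::real..} = {0}" by auto
  then have negl: "negligible ({..0} \<inter> {0::real..})" by simp
  have "?f integrable_on {0..}"
    using pos by (simp add: absolutely_integrable_on_def)
  moreover have "{..0} \<union> {0..} = (UNIV :: real set)" by auto
  ultimately show ?thesis using integrable_Un[OF negl neg] by metis
qed

lemma sqrt2_half_le_1: "sqrt 2 / 2 \<le> (1::real)"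
proof -
  have "sqrt 2 \<le> sqrt (4::real)" by (rule real_sqrt_le_mono) simp
  then show ?thesis by simp
qed

lemma phi_pos: "0 < phi x"
  unfolding phi_def by (simp add: add_pos_pos)

lemma phi_lt_1: "phi x < 1"
  unfolding phi_def by (simp add: add_pos_pos divide_less_eq)

lemma one_minus_phi: "1 - phi x = exp (- (sqrt 2 / 2) * x) / (1 + exp (- (sqrt 2 / 2) * x))"
proof -
  have "0 < 1 + exp (- (sqrt 2 / 2) * x)" by (simp add: add_pos_pos)
  then show ?thesis unfolding phi_def by (simp add: diff_divide_eq_iff del: mult_minus_left)
qed

lemma deriv_phi: "deriv phi x = sqrt 2 / 2 * phi x * (1 - phi x)"
proof -
  define E where "E = exp (- (sqrt 2 / 2) * x)"
  have nz: "1 + exp y \<noteq> 0" for y :: real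
    using exp_gt_zero[of y] by linarith
  have "(phi has_real_derivative (sqrt 2 / 2 * E / (1 + E)^2)) (at x)"
    unfolding phi_def[abs_def] E_def
    by (rule derivative_eq_intros refl | simp add: nz)+
       (simp add: nz power2_eq_square)
  then have "deriv phi x = sqrt 2 / 2 * E / (1 + E)^2" by (rule DERIV_imp_deriv)
  also have "\<dots> = sqrt 2 / 2 * phi x * (1 - phi x)"
    unfolding one_minus_phi unfolding phi_def E_def[symmetric] by (simp add: power2_eq_square)
  finally show ?thesis .
qed

lemma continuous_on_phi: "continuous_on UNIV phi"
  unfolding phi_def[abs_def] by (intro continuous_intros) (smt (verit) exp_gt_zero)

lemma phi_le_half:
  assumes "x \<le> 0"
  shows "phi x \<le> 1/2"
proof -
  have "0 \<le> - (sqrt 2 / 2) * x" using assms by (simp add: mult_nonneg_nonpos)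
  then have "1 \<le> exp (- (sqrt 2 / 2) * x)" by simp
  then show ?thesis unfolding phi_def by (simp add: divide_le_eq add_pos_pos)
qed

lemma phi_ge_quarter:
  assumes "-1 \<le> x"
  shows "1/4 \<le> phi x"
proof -
  have "sqrt 2 / 2 * (- x) \<le> sqrt 2 / 2 * 1"
    using assms by (intro mult_left_mono) auto
  then have "- (sqrt 2 / 2) * x \<le> 1" using sqrt2_half_le_1 by linarith
  then have "exp (- (sqrt 2 / 2) * x) \<le> 3"
    using exp_le by (meson exp_le_cancel_iff order.trans)
  then show ?thesis unfolding phi_def by (simp add: le_divide_eq add_pos_pos)
qed

lemma tilted_logistic_factor_le:
  fixes e E :: real
  assumes E: "0 < E" and e: "0 \<le> e" "e \<le> max 1 E"
  shows "e * E / (1 + E)^3 \<le> min E (1 / E)"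
proof -
  have "e * E / (1 + E)^3 \<le> max 1 E * E / (1 + E)^3"
    using E e by (intro divide_right_mono mult_right_mono) auto
  also have "\<dots> \<le> min E (1 / E)"
  proof (cases "E \<le> 1")
    case True
    have "E / (1 + E)^3 \<le> E" using E by (simp add: divide_le_eq)
    moreover have "E \<le> 1 / E" using E True by (simp add: le_divide_eq mult_le_one)
    ultimately show ?thesis using True by simp
  next
    case False
    have "E * E / (1 + E)^3 \<le> E * E / E^3"
      using E by (intro divide_left_mono power_mono) auto
    also have "\<dots> = 1 / E" using E by (simp add: power3_eq_cube)
    moreover have "1 / E < E" using False by (smt (verit) less_divide_eq_1_pos)
    ultimately show ?thesis using False by simp
  qed
  finally show ?thesis .
qed

lemma tilted_logistic_le:
  assumes k: "0 \<le> k" "k \<le> 1/2"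
  shows "exp (- sqrt 2 * k * x) * phi x^2 * (1 - phi x) \<le> exp (- (sqrt 2 / 2) * \<bar>x\<bar>)"
proof -
  define E where "E = exp (- (sqrt 2 / 2) * x)"
  have E: "0 < E" by (simp add: E_def)
  have eq: "exp (- sqrt 2 * k * x) * phi x^2 * (1 - phi x)
      = exp (- sqrt 2 * k * x) * E / (1 + E)^3"
    unfolding one_minus_phi unfolding phi_def E_def[symmetric] by (simp add: power2_eq_square power3_eq_cube)
  have weight: "exp (- sqrt 2 * k * x) \<le> max 1 E"
  proof (cases "0 \<le> x")
    case True
    then have "0 \<le> sqrt 2 * k * x" using k by simp
    then have "exp (- sqrt 2 * k * x) \<le> 1" by simp
    then show ?thesis by linarith
  next
    case False
    have "- sqrt 2 * k * x \<le> - (sqrt 2 / 2) * x"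
      using False k by (intro mult_right_mono_neg) auto
    then have "exp (- sqrt 2 * k * x) \<le> E" by (simp only: E_def exp_le_cancel_iff)
    then show ?thesis by linarith
  qed
  have inv: "1 / E = exp ((sqrt 2 / 2) * x)" by (simp add: E_def exp_minus')
  have decay: "min E (1 / E) = exp (- (sqrt 2 / 2) * \<bar>x\<bar>)"
    unfolding inv unfolding E_def by (cases "0 \<le> x") (simp_all add: min_def zero_le_mult_iff)
  show ?thesis
    unfolding eq decay[symmetric]
    by (rule tilted_logistic_factor_le[OF E _ weight]) simp
qed

definition weighted_dphi_sq :: "real \<Rightarrow> real \<Rightarrow> real" where
  "weighted_dphi_sq k x = exp (- sqrt 2 * k * x) * (deriv phi x)^2"

definition weighted_dphi_phi :: "real \<Rightarrow> real \<Rightarrow> real" where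
  "weighted_dphi_phi k x = exp (- sqrt 2 * k * x) * deriv phi x * phi x"

lemma weighted_dphi_sq_eq:
  "weighted_dphi_sq k x = 1/2 * (exp (- sqrt 2 * k * x) * phi x^2 * (1 - phi x)) * (1 - phi x)"
  by (simp add: weighted_dphi_sq_def deriv_phi power_mult_distrib power_divide)
     (simp add: power2_eq_square)

lemma weighted_dphi_phi_eq:
  "weighted_dphi_phi k x = sqrt 2 / 2 * (exp (- sqrt 2 * k * x) * phi x^2 * (1 - phi x))"
  by (simp add: weighted_dphi_phi_def deriv_phi power2_eq_square)

lemma weighted_dphi_bounds:
  assumes k: "0 \<le> k" "k \<le> 1/2"
  shows "\<bar>weighted_dphi_sq k x\<bar> \<le> exp (- (sqrt 2 / 2) * \<bar>x\<bar>)"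
    and "\<bar>weighted_dphi_phi k x\<bar> \<le> exp (- (sqrt 2 / 2) * \<bar>x\<bar>)"
proof -
  define T where "T = exp (- sqrt 2 * k * x) * phi x^2 * (1 - phi x)"
  have T: "0 \<le> T" "T \<le> exp (- (sqrt 2 / 2) * \<bar>x\<bar>)"
    using phi_pos[of x] phi_lt_1[of x] tilted_logistic_le[OF k, of x] by (simp_all add: T_def)
  have "T * (1 - phi x) \<le> T * 1"
    using T phi_pos[of x] by (intro mult_left_mono) auto
  moreover have "0 \<le> T * (1 - phi x)" using T phi_lt_1[of x] by simp
  moreover have "weighted_dphi_sq k x = 1/2 * (T * (1 - phi x))"
    by (simp add: weighted_dphi_sq_eq T_def)
  ultimately show "\<bar>weighted_dphi_sq k x\<bar> \<le> exp (- (sqrt 2 / 2) * \<bar>x\<bar>)"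
    using T by (simp add: abs_of_nonneg)
  have "sqrt 2 / 2 * T \<le> 1 * T"
    using T sqrt2_half_le_1 by (intro mult_right_mono) auto
  moreover have nonneg: "0 \<le> sqrt 2 / 2 * T" using T by simp
  moreover have "weighted_dphi_phi k x = sqrt 2 / 2 * T"
    by (simp add: weighted_dphi_phi_eq T_def)
  ultimately show "\<bar>weighted_dphi_phi k x\<bar> \<le> exp (- (sqrt 2 / 2) * \<bar>x\<bar>)"
    using T by (simp only: abs_of_nonneg[OF nonneg])
qed

lemma integrable_weighted_dphi:
  assumes k: "0 \<le> k" "k \<le> 1/2"
  shows "weighted_dphi_sq k integrable_on UNIV" and "weighted_dphi_phi k integrable_on UNIV"
proof -
  have dom: "(\<lambda>x. exp (- (sqrt 2 / 2) * \<bar>x\<bar>)) integrable_on UNIV"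
    by (rule integrable_exp_minus_abs) simp
  have "continuous_on UNIV (weighted_dphi_sq k)" "continuous_on UNIV (weighted_dphi_phi k)"
    unfolding weighted_dphi_sq_eq[abs_def] weighted_dphi_phi_eq[abs_def]
    by (intro continuous_intros continuous_on_phi)+
  then show "weighted_dphi_sq k integrable_on UNIV" "weighted_dphi_phi k integrable_on UNIV"
    using weighted_dphi_bounds[OF k]
    by (auto intro!: measurable_bounded_by_integrable_imp_integrable_real[OF _ dom]
        continuous_imp_measurable_on_sets_lebesgue)
qed

lemma integral_weighted_dphi_phi_le:
  assumes k: "0 \<le> k" "k \<le> 1/2"
  shows "integral UNIV (weighted_dphi_phi k) \<le> integral UNIV (\<lambda>x. exp (- (sqrt 2 / 2) * \<bar>x\<bar>))"
  using weighted_dphi_bounds(2)[OF k]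
  by (intro integral_le integrable_weighted_dphi[OF k] integrable_exp_minus_abs)
     (auto simp: abs_le_iff)

lemma integral_weighted_dphi_sq_ge:
  assumes k: "0 \<le> k" "k \<le> 1/2"
  shows "1/128 \<le> integral UNIV (weighted_dphi_sq k)"
proof -
  have lower: "1/128 \<le> weighted_dphi_sq k x" if x: "x \<in> {-1..0}" for x
  proof -
    have "0 \<le> - sqrt 2 * k * x" using x k by (simp add: mult_nonneg_nonpos)
    then have e: "1 \<le> exp (- sqrt 2 * k * x)" by simp
    have p: "1/4 \<le> phi x" "phi x \<le> 1/2"
      using x phi_ge_quarter phi_le_half by auto
    have "1/16 \<le> phi x * phi x" "1/4 \<le> (1 - phi x) * (1 - phi x)"
      using mult_mono[OF p(1) p(1)] mult_mono[of "1/2" "1 - phi x" "1/2" "1 - phi x"] p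
      by simp_all
    then have "1/16 * (1/4) \<le> (phi x * phi x) * ((1 - phi x) * (1 - phi x))"
      by (intro mult_mono) auto
    then have "1/64 \<le> phi x^2 * (1 - phi x)^2" by (simp add: power2_eq_square)
    then have "1/64 \<le> exp (- sqrt 2 * k * x) * (phi x^2 * (1 - phi x)^2)"
      using e by (smt (verit) mult_le_cancel_right1 zero_le_power2 mult_nonneg_nonneg)
    moreover have "weighted_dphi_sq k x = 1/2 * (exp (- sqrt 2 * k * x) * (phi x^2 * (1 - phi x)^2))"
      by (simp add: weighted_dphi_sq_eq power2_eq_square mult_ac)
    ultimately show ?thesis by linarith
  qed
  have int: "weighted_dphi_sq k integrable_on {-1..0}"
    by (rule integrable_on_subinterval[OF integrable_weighted_dphi(1)[OF k]]) auto
  have "1/128 = integral {-1..(0::real)} (\<lambda>x. 1/128)" by simp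
  also have "\<dots> \<le> integral {-1..0} (weighted_dphi_sq k)"
    using lower by (intro integral_le int) auto
  also have "\<dots> \<le> integral UNIV (weighted_dphi_sq k)"
    using weighted_dphi_bounds(1)[OF k]
    by (intro integral_subset_le int integrable_weighted_dphi(1)[OF k])
       (auto simp: weighted_dphi_sq_def)
  finally show ?thesis .
qed

lemma kappa_f_bounds:
  assumes "1/80 \<le> r"
  shows "0 \<le> kappa_f r" "kappa_f r \<le> 1/2"
proof -
  define s where "s = sqrt (r / (r + 0.1))"
  have "(1/3)^2 \<le> r / (r + 0.1)" using assms by (simp add: field_simps)
  then have s: "1/3 \<le> s" unfolding s_def by (rule real_le_rsqrt)
  have "r / (r + 0.1) \<le> 1" using assms by (simp add: divide_le_eq)
  then have "s \<le> 1" by (simp add: s_def)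
  then show "0 \<le> kappa_f r" "kappa_f r \<le> 1/2"
    unfolding kappa_f_def q_fp_def q_fm_def s_def[symmetric] using s by (simp_all add: field_simps)
qed

lemma S_fun_ge_1:
  assumes r: "11/10 \<le> r"
  shows "1 \<le> S_fun r"
proof -
  have u: "6/5 < u_b r" using u_b_mem[of r] r by simp
  have "(1/2)^2 \<le> r / (r + 0.1)" using r by (simp add: field_simps)
  then have s: "1/2 \<le> sqrt (r / (r + 0.1))" by (rule real_le_rsqrt)
  have "(1/2)^2 \<le> (r + u_b r - 2) / (r + 0.1)" using r u by (simp add: field_simps)
  then have t: "1/2 \<le> sqrt ((r + u_b r - 2) / (r + 0.1))" by (rule real_le_rsqrt)
  show ?thesis
    using s t by (simp add: S_fun_def q_fp_def q_fm_def q_bp_def q_bm_def)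
qed

lemma sqrt_ratio_D0_ge:
  assumes r: "11/10 \<le> r"
  shows "(r + 0.1) / 2 \<le> sqrt ((r + 0.1) / D0 r)"
proof -
  have u: "u_b r \<in> {6/5<..<4/3}" using u_b_mem[of r] r by simp
  have S: "1 \<le> S_fun r" using S_fun_ge_1[OF r] .
  have "(2 - u_b r)^2 \<le> 1^2" using u by (intro power_mono) auto
  moreover have "0 < 2 - u_b r" using u by simp
  moreover have "(r + 0.1)^2 * 1 \<le> (r + 0.1)^2 * (S_fun r)^2"
    using S by (intro mult_left_mono) (auto simp: one_le_power)
  ultimately have "(r + 0.1)^2 * 1 / (2 * 1) \<le> (r + 0.1)^2 * (S_fun r)^2 / (2 * (2 - u_b r)^2)"
    by (intro frac_le) auto
  also have "\<dots> = (r + 0.1) / D0 r"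
    using r S by (simp add: D0_def field_simps power2_eq_square)
  finally have "(r + 0.1)^2 / 2 \<le> (r + 0.1) / D0 r" by simp
  moreover have "((r + 0.1) / 2)^2 \<le> (r + 0.1)^2 / 2"
    by (simp add: power_divide)
  ultimately have "((r + 0.1) / 2)^2 \<le> (r + 0.1) / D0 r" by linarith
  then show ?thesis by (rule real_le_rsqrt)
qed

lemma Mf_tilde_le:
  assumes r: "2 \<le> r"
  shows "Mf_tilde r \<le> integral UNIV (\<lambda>x. exp (- (sqrt 2 / 2) * \<bar>x\<bar>)) - (r + 0.1) / 256"
proof -
  define k where "k = kappa_f r"
  define P where "P = q_fp r * sqrt ((r + 0.1) / D0 r)"
  have k: "0 \<le> k" "k \<le> 1/2" using kappa_f_bounds r by (simp_all add: k_def)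
  have P: "1 * ((r + 0.1) / 2) \<le> P"
    unfolding P_def using sqrt_ratio_D0_ge[of r] r by (intro mult_mono) (auto simp: q_fp_def)
  then have "0 \<le> P" using r by simp
  from mult_mono[OF P integral_weighted_dphi_sq_ge[OF k] this]
  have "(r + 0.1) / 256 \<le> P * integral UNIV (weighted_dphi_sq k)" by simp
  moreover have "Mf_tilde r = integral UNIV (weighted_dphi_phi k) - P * integral UNIV (weighted_dphi_sq k)"
    by (simp add: Mf_tilde_def weighted_dphi_sq_def[abs_def] weighted_dphi_phi_def[abs_def] k_def P_def)
  ultimately show ?thesis
    using integral_weighted_dphi_phi_le[OF k] by linarith
qed

theorem theorem4:
  shows "filterlim Mf_tilde at_bot at_top"
  unfolding filterlim_at_bot
proof
  fix Z :: real
  define C where "C = integral UNIV (\<lambda>x. exp (- (sqrt 2 / 2) * \<bar>x\<bar>))"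
  have "eventually (\<lambda>r::real. 2 \<le> r) at_top" "eventually (\<lambda>r. 256 * (C - Z) \<le> r) at_top"
    by (rule eventually_ge_at_top)+
  then show "eventually (\<lambda>r. Mf_tilde r \<le> Z) at_top"
  proof eventually_elim
    case (elim r)
    then show ?case using Mf_tilde_le[OF elim(1)] unfolding C_def by (simp add: field_simps)
  qed
qed

end
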